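(* Assume the contextual smoothness condition with parameters $\delta>0$, $\mu\in(0,1)$, and let $\gamma=\delta(1-\mu)^{-1}$. For any strategies $w^j_t\in\Delta_K$ ($j\in[J]$, $t\in[T]$) played in the game protocol, with $\mathbf w_t=w^1_t\otimes\dots\otimes w^J_t$, $$\frac1T\sum_{t=1}^TC_t(\mathbf w_t)\le\gamma C^\star+\frac{1}{(1-\mu)T}\sum_{j=1}^J\mathrm{Reg}^j_T .$$
   Context: Setting. There are $J\ge1$ agents indexed by $j\in[J]$. Agent $j$ has a finite action set $\mathcal A^j=\{a^j_1,\dots,a^j_K\}$ with $K$ elements; $\mathcal A=\mathcal A^1\times\dots\times\mathcal A^J$, $\mathcal A^{-j}=\prod_{i\ne j}\mathcal A^i$, $\mathbf a=(a^j,\mathbf a^{-j})$. $\Delta_K$ is the probability simplex in $\mathbb R^K$, and $w\in\Delta_K$ is identified with the distribution on $\mathcal A^j$ putting mass $w[k]$ on $a^j_k$. The context set $\mathcal Z=\{z_1,\dots,z_m\}\subset\mathbb R^d$ is finite. Agent $j$ has $\phi^j:\mathcal A\to\mathbb R^d$ and cost $c^j(\mathbf w,Z)=\mathbb E_{\mathbf a\sim\mathbf w}[\langle\phi^j(\mathbf a),Z\rangle]$ (for a pure profile $\mathbf a$, $c^j(\mathbf a,Z)=\langle\phi^j(\mathbf a),Z\rangle$); for $w\in\Delta_K$ write $c^j(w,\mathbf w^{-j},Z)=c^j(w\otimes\mathbf w^{-j},Z)$. Standing assumption (bounded costs): $|\langle Z,\phi^j(\mathbf a)\rangle|\le1$.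 Game protocol: $T$ rounds, fixed sequence $Z_1,\dots,Z_T\in\mathcal Z$; at round $t$ each agent $j$ plays $w^j_t\in\Delta_K$ and incurs $c^j(w^j_t,\mathbf w^{-j}_t,Z_t)$ with $\mathbf w^{-j}_t=\bigotimes_{i\ne j}w^i_t$. Contextual external regret: $\mathrm{Reg}^j_T=\sum_{t=1}^Tc^j(w^j_t,\mathbf w^{-j}_t,Z_t)-\min_{\pi:\mathcal Z\to\Delta_K}\sum_{t=1}^Tc^j(\pi(Z_t),\mathbf w^{-j}_t,Z_t)$. Social cost: $C_t(\mathbf w)=\sum_{j=1}^Jc^j(\mathbf w,Z_t)$, and $C^\star=\min_{\boldsymbol\rho:\mathcal Z\to\mathcal A}T^{-1}\sum_{t=1}^T\sum_{j=1}^Jc^j(\boldsymbol\rho(Z_t),Z_t)$. Contextual smoothness condition with parameters $(\delta,\mu)$: for all $\mathbf a,\mathbf a_\star\in\mathcal A$ and $z\in\mathcal Z$, $\sum_{j}\langle z,\phi^j(a^j_\star,\mathbf a^{-j})\rangle\le\sum_j[\delta\langle z,\phi^j(\mathbf a_\star)\rangle+\mu\langle z,\phi^j(\mathbf a)\rangle]$. *)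

theory Defs
  imports "HOL-Analysis.Analysis"
begin

text \<open>Agents are indexed by j < J, actions of each agent by k < K (action a^j_k is k).
  A mixed strategy of one agent is a vector w :: nat => real in the prob_simplex Delta_K
  (only the entries k < K matter). A mixed profile W assigns to each agent j its strategy W j;
  the joint distribution is the product distribution.\<close>

definition prob_simplex :: "nat \<Rightarrow> (nat \<Rightarrow> real) set" where
  "prob_simplex K = {w. (\<forall>k<K. 0 \<le> w k) \<and> (\<Sum>k<K. w k) = 1}"

definition profiles :: "nat \<Rightarrow> nat \<Rightarrow> (nat \<Rightarrow> nat) set" where
  "profiles J K = PiE {..<J} (\<lambda>_. {..<K})"

definition prod_prob :: "nat \<Rightarrow> (nat \<Rightarrow> nat \<Rightarrow> real) \<Rightarrow> (nat \<Rightarrow> nat) \<Rightarrow> real" where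
  "prod_prob J W a = (\<Prod>i<J. W i (a i))"

definition cost :: "nat \<Rightarrow> nat \<Rightarrow> (nat \<Rightarrow> (nat \<Rightarrow> nat) \<Rightarrow> 'v::real_inner)
                   \<Rightarrow> nat \<Rightarrow> (nat \<Rightarrow> nat \<Rightarrow> real) \<Rightarrow> 'v \<Rightarrow> real" where
  "cost J K \<phi> j W z = (\<Sum>a\<in>profiles J K. prod_prob J W a * (\<phi> j a \<bullet> z))"

definition social_cost :: "nat \<Rightarrow> nat \<Rightarrow> (nat \<Rightarrow> (nat \<Rightarrow> nat) \<Rightarrow> 'v::real_inner)
                   \<Rightarrow> (nat \<Rightarrow> nat \<Rightarrow> real) \<Rightarrow> 'v \<Rightarrow> real" where
  "social_cost J K \<phi> W z = (\<Sum>j<J. cost J K \<phi> j W z)"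

text \<open>Contextual external regret of agent j; rounds are t < T, w t is the mixed profile
  at round t, Z t the context. The minimum over policies pi : Zset -> Delta_K is written as Inf.\<close>
definition regret :: "nat \<Rightarrow> nat \<Rightarrow> nat \<Rightarrow> (nat \<Rightarrow> (nat \<Rightarrow> nat) \<Rightarrow> 'v::real_inner)
                   \<Rightarrow> 'v set \<Rightarrow> (nat \<Rightarrow> 'v) \<Rightarrow> (nat \<Rightarrow> nat \<Rightarrow> nat \<Rightarrow> real) \<Rightarrow> nat \<Rightarrow> real" where
  "regret J K T \<phi> Zs Z w j =
     (\<Sum>t<T. cost J K \<phi> j (w t) (Z t))
     - Inf {\<Sum>t<T. cost J K \<phi> j ((w t)(j := \<pi> (Z t))) (Z t) | \<pi>. \<forall>z\<in>Zs. \<pi> z \<in> prob_simplex K}"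

definition opt_cost :: "nat \<Rightarrow> nat \<Rightarrow> nat \<Rightarrow> (nat \<Rightarrow> (nat \<Rightarrow> nat) \<Rightarrow> 'v::real_inner)
                   \<Rightarrow> 'v set \<Rightarrow> (nat \<Rightarrow> 'v) \<Rightarrow> real" where
  "opt_cost J K T \<phi> Zs Z =
     Inf {(1 / real T) * (\<Sum>t<T. \<Sum>j<J. \<phi> j (\<rho> (Z t)) \<bullet> Z t) | \<rho>. \<forall>z\<in>Zs. \<rho> z \<in> profiles J K}"

end

theory Submission imports Defs begin

text \<open>Fix a benchmark policy \<rho> mapping contexts to pure profiles. In every round, the deviation
  of each agent j to the pure action \<rho>(Z t) j is a contextual policy, so the cumulative costs
  exceed the cumulative deviation costs by at most the regret. Averaging the smoothness
  inequality over the product distribution w t bounds the sum of the deviation costs by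
  \<delta> times the social cost of \<rho>(Z t) plus \<mu> times the social cost of w t. Summing over rounds,
  (1 - \<mu>) times the total social cost of the play is at most \<delta> times the total social cost of
  \<rho> plus the total regret; taking the infimum over \<rho> yields the bound.\<close>

lemma sum_profiles_pivot:
  assumes "j < J"
  shows "(\<Sum>a\<in>profiles J K. h a) =
    (\<Sum>y<K. \<Sum>g\<in>PiE ({..<J} - {j}) (\<lambda>_. {..<K}). h (g(j := y)))"
proof -
  let ?S = "{..<J} - {j}"
  have split: "{..<J} = insert j ?S" using assms by auto
  have "profiles J K = (\<lambda>(y, g). g(j := y)) ` ({..<K} \<times> PiE ?S (\<lambda>_. {..<K}))"
    unfolding profiles_def by (subst split, rule PiE_insert_eq)
  moreover have "inj_on (\<lambda>(y, g). g(j := y)) ({..<K} \<times> PiE ?S (\<lambda>_. {..<K}))"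
    using inj_combinator[of j ?S "\<lambda>_. {..<K}"] by simp
  ultimately show ?thesis
    by (simp add: sum.reindex sum.cartesian_product split_def)
qed

lemma prod_prob_fun_upd_pivot:
  assumes "j < J" "g \<in> PiE ({..<J} - {j}) (\<lambda>_. {..<K})"
  shows "prod_prob J W (g(j := y)) = W j y * (\<Prod>i\<in>{..<J} - {j}. W i (g i))"
proof -
  have split: "{..<J} = insert j ({..<J} - {j})" using assms by auto
  show ?thesis unfolding prod_prob_def
    by (subst split, subst prod.insert) (auto intro!: prod.cong)
qed

lemma sum_prod_prob_eq_1:
  assumes "\<forall>i<J. W i \<in> prob_simplex K"
  shows "(\<Sum>a\<in>profiles J K. prod_prob J W a) = 1"
proof -
  have "(\<Sum>a\<in>profiles J K. prod_prob J W a) = (\<Prod>i<J. \<Sum>k<K. W i k)"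
    unfolding profiles_def prod_prob_def by (subst prod_sum_PiE) auto
  also have "\<dots> = 1" using assms by (simp add: prob_simplex_def)
  finally show ?thesis .
qed

lemma prod_prob_nonneg:
  assumes "\<forall>i<J. W i \<in> prob_simplex K" "a \<in> profiles J K"
  shows "0 \<le> prod_prob J W a"
  using assms unfolding prod_prob_def profiles_def prob_simplex_def
  by (intro prod_nonneg) (auto simp: PiE_iff)

definition pure_strategy :: "nat \<Rightarrow> nat \<Rightarrow> real" where
  "pure_strategy b = (\<lambda>k. if k = b then 1 else 0)"

lemma pure_strategy_in_prob_simplex: "b < K \<Longrightarrow> pure_strategy b \<in> prob_simplex K"
  by (simp add: prob_simplex_def pure_strategy_def)

lemma sum_prod_prob_pure_deviation:
  assumes "j < J" "b < K" "W j \<in> prob_simplex K"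
  shows "(\<Sum>a\<in>profiles J K. prod_prob J (W(j := pure_strategy b)) a * f a)
       = (\<Sum>a\<in>profiles J K. prod_prob J W a * f (a(j := b)))"
proof -
  let ?P = "PiE ({..<J} - {j}) (\<lambda>_. {..<K})"
  let ?Q = "\<lambda>g. \<Prod>i\<in>{..<J} - {j}. W i (g i)"
  have others: "(\<Prod>i\<in>{..<J} - {j}. (W(j := pure_strategy b)) i (g i)) = ?Q g" for g
    by (rule prod.cong) auto
  have "(\<Sum>a\<in>profiles J K. prod_prob J (W(j := pure_strategy b)) a * f a)
     = (\<Sum>y<K. \<Sum>g\<in>?P. pure_strategy b y * (?Q g * f (g(j := y))))"
    using assms(1)
    by (simp add: sum_profiles_pivot prod_prob_fun_upd_pivot others mult.assoc cong: sum.cong)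
  also have "\<dots> = (\<Sum>y<K. pure_strategy b y * (\<Sum>g\<in>?P. ?Q g * f (g(j := y))))"
    by (simp add: sum_distrib_left)
  also have "\<dots> = (\<Sum>g\<in>?P. ?Q g * f (g(j := b)))"
    using assms(2)
    by (simp add: pure_strategy_def if_distrib[of "\<lambda>c. c * _"] sum.delta cong: if_cong)
  also have "\<dots> = (\<Sum>y<K. W j y) * (\<Sum>g\<in>?P. ?Q g * f (g(j := b)))"
    using assms(3) by (simp add: prob_simplex_def)
  also have "\<dots> = (\<Sum>y<K. \<Sum>g\<in>?P. W j y * (?Q g * f ((g(j := y))(j := b))))"
    by (simp add: sum_distrib_left sum_distrib_right sum.swap[of _ "{..<K}"])
  also have "\<dots> = (\<Sum>a\<in>profiles J K. prod_prob J W a * f (a(j := b)))"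
    using assms(1)
    by (simp add: sum_profiles_pivot prod_prob_fun_upd_pivot mult.assoc cong: sum.cong)
  finally show ?thesis .
qed

lemma cost_ge_lower_bound:
  assumes "\<forall>i<J. W i \<in> prob_simplex K" "\<forall>a\<in>profiles J K. c \<le> \<phi> j a \<bullet> z"
  shows "c \<le> cost J K \<phi> j W z"
proof -
  have "(\<Sum>a\<in>profiles J K. prod_prob J W a * c) \<le> cost J K \<phi> j W z"
    unfolding cost_def
    using assms prod_prob_nonneg[OF assms(1)] by (intro sum_mono mult_left_mono) auto
  thus ?thesis by (simp add: sum_distrib_right[symmetric] sum_prod_prob_eq_1[OF assms(1)])
qed

lemma regret_ge_deviation:
  assumes "j < J" "\<forall>t<T. Z t \<in> Zs" "\<forall>t<T. \<forall>i<J. w t i \<in> prob_simplex K"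
    and bounded: "\<forall>a\<in>profiles J K. \<forall>z\<in>Zs. \<bar>z \<bullet> \<phi> j a\<bar> \<le> 1"
    and \<pi>: "\<forall>z\<in>Zs. \<pi> z \<in> prob_simplex K"
  shows "(\<Sum>t<T. cost J K \<phi> j (w t) (Z t)) - (\<Sum>t<T. cost J K \<phi> j ((w t)(j := \<pi> (Z t))) (Z t))
           \<le> regret J K T \<phi> Zs Z w j"
proof -
  let ?A = "{\<Sum>t<T. cost J K \<phi> j ((w t)(j := \<pi>' (Z t))) (Z t) | \<pi>'. \<forall>z\<in>Zs. \<pi>' z \<in> prob_simplex K}"
  have "bdd_below ?A"
  proof (rule bdd_belowI[of _ "- real T"])
    fix x assume "x \<in> ?A"
    then obtain \<pi>' where "\<forall>z\<in>Zs. \<pi>' z \<in> prob_simplex K"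
      and x: "x = (\<Sum>t<T. cost J K \<phi> j ((w t)(j := \<pi>' (Z t))) (Z t))" by auto
    with assms(2,3) bounded have "(\<Sum>t<T. - 1) \<le> x"
      unfolding x by (intro sum_mono cost_ge_lower_bound) (auto simp: abs_le_iff inner_commute)
    thus "- real T \<le> x" by simp
  qed
  moreover have "(\<Sum>t<T. cost J K \<phi> j ((w t)(j := \<pi> (Z t))) (Z t)) \<in> ?A"
    using \<pi> by blast
  ultimately have "Inf ?A \<le> (\<Sum>t<T. cost J K \<phi> j ((w t)(j := \<pi> (Z t))) (Z t))"
    by (rule cInf_lower[rotated])
  then show ?thesis unfolding regret_def by simp
qed

lemma sum_pure_deviation_costs_le:
  assumes W: "\<forall>i<J. W i \<in> prob_simplex K" and r: "r \<in> profiles J K"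
    and smooth: "\<forall>a\<in>profiles J K. (\<Sum>j<J. z \<bullet> \<phi> j (a(j := r j)))
          \<le> (\<Sum>j<J. \<delta> * (z \<bullet> \<phi> j r) + \<mu> * (z \<bullet> \<phi> j a))"
  shows "(\<Sum>j<J. cost J K \<phi> j (W(j := pure_strategy (r j))) z)
     \<le> \<delta> * (\<Sum>j<J. \<phi> j r \<bullet> z) + \<mu> * social_cost J K \<phi> W z"
proof -
  have r_lt: "j < J \<Longrightarrow> r j < K" for j using r by (auto simp: profiles_def PiE_iff)
  have "(\<Sum>j<J. cost J K \<phi> j (W(j := pure_strategy (r j))) z)
      = (\<Sum>a\<in>profiles J K. prod_prob J W a * (\<Sum>j<J. z \<bullet> \<phi> j (a(j := r j))))"
    unfolding cost_def using W r_lt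
    by (simp add: sum_prod_prob_pure_deviation sum_distrib_left inner_commute
        sum.swap[of _ "{..<J}"])
  also have "\<dots> \<le> (\<Sum>a\<in>profiles J K.
      prod_prob J W a * (\<Sum>j<J. \<delta> * (z \<bullet> \<phi> j r) + \<mu> * (z \<bullet> \<phi> j a)))"
    by (rule sum_mono, rule mult_left_mono) (use smooth prod_prob_nonneg[OF W] in auto)
  also have "\<dots> = (\<Sum>a\<in>profiles J K. prod_prob J W a) * (\<delta> * (\<Sum>j<J. \<phi> j r \<bullet> z))
       + \<mu> * (\<Sum>j<J. \<Sum>a\<in>profiles J K. prod_prob J W a * (\<phi> j a \<bullet> z))"
    by (simp add: sum.distrib sum_distrib_left sum_distrib_right inner_commute
        sum.swap[of _ "{..<J}"] algebra_simps)
  also have "\<dots> = \<delta> * (\<Sum>j<J. \<phi> j r \<bullet> z) + \<mu> * social_cost J K \<phi> W z"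
    by (simp add: sum_prod_prob_eq_1[OF W] social_cost_def cost_def)
  finally show ?thesis .
qed

lemma social_cost_le_benchmark_plus_regret:
  assumes Z: "\<forall>t<T. Z t \<in> Zs" and w: "\<forall>t<T. \<forall>j<J. w t j \<in> prob_simplex K"
    and bounded: "\<forall>j<J. \<forall>a\<in>profiles J K. \<forall>z\<in>Zs. \<bar>z \<bullet> \<phi> j a\<bar> \<le> 1"
    and smooth: "\<forall>a\<in>profiles J K. \<forall>a'\<in>profiles J K. \<forall>z\<in>Zs.
        (\<Sum>j<J. z \<bullet> \<phi> j (a(j := a' j)))
          \<le> (\<Sum>j<J. \<delta> * (z \<bullet> \<phi> j a') + \<mu> * (z \<bullet> \<phi> j a))"
    and \<rho>: "\<forall>z\<in>Zs. \<rho> z \<in> profiles J K"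
  shows "(1 - \<mu>) * (\<Sum>t<T. social_cost J K \<phi> (w t) (Z t))
           \<le> \<delta> * (\<Sum>t<T. \<Sum>j<J. \<phi> j (\<rho> (Z t)) \<bullet> Z t) + (\<Sum>j<J. regret J K T \<phi> Zs Z w j)"
proof -
  define dev where "dev j t = cost J K \<phi> j ((w t)(j := pure_strategy (\<rho> (Z t) j))) (Z t)" for j t
  have "(\<Sum>t<T. social_cost J K \<phi> (w t) (Z t)) = (\<Sum>j<J. \<Sum>t<T. cost J K \<phi> j (w t) (Z t))"
    unfolding social_cost_def by (rule sum.swap)
  also have "\<dots> \<le> (\<Sum>j<J. regret J K T \<phi> Zs Z w j + (\<Sum>t<T. dev j t))"
  proof (rule sum_mono)
    fix j assume j: "j \<in> {..<J}"
    have "\<forall>z\<in>Zs. pure_strategy (\<rho> z j) \<in> prob_simplex K"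
      using \<rho> j by (auto intro!: pure_strategy_in_prob_simplex simp: profiles_def PiE_iff)
    with j show "(\<Sum>t<T. cost J K \<phi> j (w t) (Z t)) \<le> regret J K T \<phi> Zs Z w j + (\<Sum>t<T. dev j t)"
      using regret_ge_deviation[OF _ Z w] bounded unfolding dev_def by fastforce
  qed
  also have "\<dots> = (\<Sum>j<J. regret J K T \<phi> Zs Z w j) + (\<Sum>t<T. \<Sum>j<J. dev j t)"
    by (simp add: sum.distrib sum.swap[of dev])
  also have "\<dots> \<le> (\<Sum>j<J. regret J K T \<phi> Zs Z w j) + (\<Sum>t<T.
      \<delta> * (\<Sum>j<J. \<phi> j (\<rho> (Z t)) \<bullet> Z t) + \<mu> * social_cost J K \<phi> (w t) (Z t))"
    unfolding dev_def using Z w \<rho> smooth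
    by (intro add_left_mono sum_mono sum_pure_deviation_costs_le) auto
  also have "\<dots> = (\<Sum>j<J. regret J K T \<phi> Zs Z w j)
      + \<delta> * (\<Sum>t<T. \<Sum>j<J. \<phi> j (\<rho> (Z t)) \<bullet> Z t) + \<mu> * (\<Sum>t<T. social_cost J K \<phi> (w t) (Z t))"
    by (simp add: sum.distrib sum_distrib_left)
  finally show ?thesis by (simp add: algebra_simps)
qed

lemma opt_cost_greatest:
  assumes "K \<ge> 1"
    and "\<And>\<rho>. \<forall>z\<in>Zs. \<rho> z \<in> profiles J K \<Longrightarrow>
           c \<le> (1 / real T) * (\<Sum>t<T. \<Sum>j<J. \<phi> j (\<rho> (Z t)) \<bullet> Z t)"
  shows "c \<le> opt_cost J K T \<phi> Zs Z"
proof -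
  have "restrict (\<lambda>_. 0) {..<J} \<in> profiles J K" using assms(1) by (auto simp: profiles_def)
  then have "\<exists>\<rho>. \<forall>z\<in>Zs. \<rho> z \<in> profiles J K"
    by (intro exI[of _ "\<lambda>_. restrict (\<lambda>_. 0) {..<J}"]) simp
  then show ?thesis unfolding opt_cost_def using assms(2) by (intro cInf_greatest) auto
qed

theorem proposition4:
  fixes J K T :: nat
    and \<phi> :: "nat \<Rightarrow> (nat \<Rightarrow> nat) \<Rightarrow> 'v::euclidean_space"
    and Zs :: "'v set"
    and Z :: "nat \<Rightarrow> 'v"
    and w :: "nat \<Rightarrow> nat \<Rightarrow> nat \<Rightarrow> real"
    and \<delta> \<mu> :: real
  assumes "J \<ge> 1" and "K \<ge> 1" and "T \<ge> 1"
    and "finite Zs"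
    and "\<forall>t<T. Z t \<in> Zs"
    and bounded: "\<forall>j<J. \<forall>a\<in>profiles J K. \<forall>z\<in>Zs. \<bar>z \<bullet> \<phi> j a\<bar> \<le> 1"
    and smooth: "\<forall>a\<in>profiles J K. \<forall>a'\<in>profiles J K. \<forall>z\<in>Zs.
        (\<Sum>j<J. z \<bullet> \<phi> j (a(j := a' j)))
          \<le> (\<Sum>j<J. \<delta> * (z \<bullet> \<phi> j a') + \<mu> * (z \<bullet> \<phi> j a))"
    and "\<delta> > 0" and "0 < \<mu>" and "\<mu> < 1"
    and "\<forall>t<T. \<forall>j<J. w t j \<in> prob_simplex K"
  shows "(1 / real T) * (\<Sum>t<T. social_cost J K \<phi> (w t) (Z t))
           \<le> (\<delta> / (1 - \<mu>)) * opt_cost J K T \<phi> Zs Z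
             + (1 / ((1 - \<mu>) * real T)) * (\<Sum>j<J. regret J K T \<phi> Zs Z w j)"
proof -
  define S where "S = (\<Sum>t<T. social_cost J K \<phi> (w t) (Z t))"
  define R where "R = (\<Sum>j<J. regret J K T \<phi> Zs Z w j)"
  have pos: "0 < real T" "0 < \<delta> * real T" "0 < 1 - \<mu>" using assms(3,8,10) by auto
  have "((1 - \<mu>) * S - R) / (\<delta> * real T) \<le> opt_cost J K T \<phi> Zs Z"
  proof (rule opt_cost_greatest[OF assms(2)])
    fix \<rho> :: "'v \<Rightarrow> nat \<Rightarrow> nat" assume \<rho>: "\<forall>z\<in>Zs. \<rho> z \<in> profiles J K"
    let ?B = "\<Sum>t<T. \<Sum>j<J. \<phi> j (\<rho> (Z t)) \<bullet> Z t"
    from social_cost_le_benchmark_plus_regret[OF assms(5,11) bounded smooth \<rho>]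
    have "((1 - \<mu>) * S - R) / (\<delta> * real T) \<le> (\<delta> * ?B) / (\<delta> * real T)"
      using pos unfolding S_def R_def by (intro divide_right_mono) auto
    also have "\<dots> = (1 / real T) * ?B" using assms(8) by simp
    finally show "((1 - \<mu>) * S - R) / (\<delta> * real T) \<le> (1 / real T) * ?B" .
  qed
  then have "(\<delta> / (1 - \<mu>)) * (((1 - \<mu>) * S - R) / (\<delta> * real T))
               \<le> (\<delta> / (1 - \<mu>)) * opt_cost J K T \<phi> Zs Z"
    using pos assms(8) by (intro mult_left_mono) auto
  moreover have "(\<delta> / (1 - \<mu>)) * (((1 - \<mu>) * S - R) / (\<delta> * real T))
      = ((1 - \<mu>) * S - R) / ((1 - \<mu>) * real T)"
    using pos assms(8) by simp
  also have "\<dots> = (1 / real T) * S - (1 / ((1 - \<mu>) * real T)) * R"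
    using pos by (simp add: diff_divide_distrib)
  ultimately show ?thesis unfolding S_def R_def by linarith
qed

end
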